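(* Let $d=d'+d''$ and, for $\tau=(\tau',\tau'')\in(0,1]^2$, let $g_\tau$ be the metric on $\mathbb{R}^{2d}=\mathbb{R}^{2(d'+d'')}$, with coordinates $X=(q',q'',p)$, $q'\in\mathbb{R}^{d'}$, $q''\in\mathbb{R}^{d''}$, $p\in\mathbb{R}^d$, given by $$g_\tau=\frac{\tau'dq'^2}{\langle\sqrt{\tau'}q'\rangle^2}+\tau''dq''^2+\frac{\tau'\tau''dp^2}{\langle\sqrt{\tau'\tau''}p\rangle^2}.$$ Then the family $(g_\tau)_{\tau\in(0,1]^2}$ is admissible.
   Context: $\langle t\rangle=(1+|t|^2)^{1/2}$. The symplectic form on $\mathbb{R}^{2d}_{q,p}$ is $\sigma(X,X_1)=\sum_j(p^jq_{1,j}-q_jp_1^j)$ for $X=(q,p)$, $X_1=(q_1,p_1)$. For a metric $g$ (a family of positive definite quadratic forms $g_X$, $X\in\mathbb{R}^{2d}$), the dual metric is $g^\sigma_X(T)=\sup_{T_1\neq0}\frac{|\sigma(T,T_1)|^2}{g_X(T_1)}$ and the gain is $\lambda(X)=\inf_{T\ne0}(g^\sigma_X(T)/g_X(T))^{1/2}$. A family $(g_\tau)_{\tau\in\mathcal{T}}$ of metrics is admissible if: (uncertainty) $\lambda_\tau(X)\ge1$ for all $\tau,X$; (slowness) there is $C_1>0$ independent of $\tau$ such that $g_{\tau,X}(X-Y)\le1/C_1$ implies $(g_{\tau,X}/g_{\tau,Y})^{\pm1}\le C_1$ (i.e. $C_1^{-1}g_{\tau,Y}\le g_{\tau,X}\le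 C_1g_{\tau,Y}$ as quadratic forms); (temperance) there are $C_2,N_2>0$ independent of $\tau$ such that for all $X,Y$, $(g_{\tau,X}/g_{\tau,Y})^{\pm1}\le C_2(1+g^\sigma_{\tau,X}(X-Y))^{N_2}$. *)

theory Defs
  imports "HOL-Analysis.Analysis"
begin

type_synonym 'n phase = "(real^'n) \<times> (real^'n)"

definition symp :: "'n::finite phase \<Rightarrow> 'n phase \<Rightarrow> real" where
  "symp X X1 = (\<Sum>j\<in>UNIV. (snd X)$j * (fst X1)$j - (fst X)$j * (snd X1)$j)"

definition is_metric :: "('n::finite phase \<Rightarrow> 'n phase \<Rightarrow> real) \<Rightarrow> bool" where
  "is_metric g \<longleftrightarrow> (\<forall>X. (\<exists>B. bilinear B \<and> (\<forall>T. g X T = B T T)) \<and> (\<forall>T. T \<noteq> 0 \<longrightarrow> g X T > 0))"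

definition dual_metric :: "('n::finite phase \<Rightarrow> 'n phase \<Rightarrow> real) \<Rightarrow> 'n phase \<Rightarrow> 'n phase \<Rightarrow> real" where
  "dual_metric g X T = (SUP T1\<in>-{0}. \<bar>symp T T1\<bar>^2 / g X T1)"

definition gain :: "('n::finite phase \<Rightarrow> 'n phase \<Rightarrow> real) \<Rightarrow> 'n phase \<Rightarrow> real" where
  "gain g X = (INF T\<in>-{0}. sqrt (dual_metric g X T / g X T))"

definition admissible :: "'t set \<Rightarrow> ('t \<Rightarrow> 'n::finite phase \<Rightarrow> 'n phase \<Rightarrow> real) \<Rightarrow> bool" where
  "admissible TT g \<longleftrightarrow>
     (\<forall>\<tau>\<in>TT. is_metric (g \<tau>)) \<and>
     (\<forall>\<tau>\<in>TT. \<forall>X. gain (g \<tau>) X \<ge> 1) \<and>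
     (\<exists>C1>0. \<forall>\<tau>\<in>TT. \<forall>X Y. g \<tau> X (X - Y) \<le> 1 / C1 \<longrightarrow>
        (\<forall>T. g \<tau> Y T / C1 \<le> g \<tau> X T \<and> g \<tau> X T \<le> C1 * g \<tau> Y T)) \<and>
     (\<exists>C2>0. \<exists>N2>0. \<forall>\<tau>\<in>TT. \<forall>X Y T.
        g \<tau> X T \<le> C2 * (1 + dual_metric (g \<tau>) X (X - Y)) powr N2 * g \<tau> Y T \<and>
        g \<tau> Y T \<le> C2 * (1 + dual_metric (g \<tau>) X (X - Y)) powr N2 * g \<tau> X T)"

definition jbr :: "real \<Rightarrow> real" where
  "jbr t = sqrt (1 + t^2)"

definition sub_norm :: "'n::finite set \<Rightarrow> real^'n \<Rightarrow> real" where
  "sub_norm S v = sqrt (\<Sum>i\<in>S. (v$i)^2)"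

text \<open>The metric g_tau, tau = (tau', tau''); the q' coordinates are those indexed by S,
  the q'' coordinates those indexed by -S (so d' = card S, d'' = d - d').
  g_tau X T with X = (q,p), T = (dq,dp).\<close>
definition g_split :: "'n::finite set \<Rightarrow> real \<times> real \<Rightarrow> 'n phase \<Rightarrow> 'n phase \<Rightarrow> real" where
  "g_split S \<tau> X T =
     (let t1 = fst \<tau>; t2 = snd \<tau>; q = fst X; p = snd X; dq = fst T; dp = snd T in
       t1 * (sub_norm S dq)^2 / (jbr (sqrt t1 * sub_norm S q))^2
     + t2 * (sub_norm (-S) dq)^2
     + t1 * t2 * (norm dp)^2 / (jbr (sqrt (t1 * t2) * norm p))^2)"

end

theory Submission
  imports Defs
begin

text \<open>
  Up to the constant direction \<open>t\<^sub>2 dq''\<^sup>2\<close>, each coefficient of \<open>g\<^sub>\<tau>\<close> has the form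
  \<open>t / (1 + t x\<^sup>2)\<close> with \<open>t \<in> {\<tau>', \<tau>'\<tau>''} \<subseteq> (0, 1]\<close> and \<open>x\<close> the length of a
  component of the base point. All coefficients are at most 1, so \<open>g\<^sub>\<tau>\<close> is dominated by the
  Euclidean metric, whose symplectic dual is itself; hence \<open>g\<^sup>\<sigma>\<^sub>\<tau> \<ge> |\<cdot>|\<^sup>2 \<ge> g\<^sub>\<tau>\<close>,
  which is the uncertainty principle. Slowness and temperance reduce to the one-dimensional
  inequality \<open>x\<^sup>2 \<le> 2y\<^sup>2 + 2|x - y|\<^sup>2\<close>: if \<open>t|x - y|\<^sup>2\<close> is small compared with \<open>1 + t x\<^sup>2\<close>
  the weights at \<open>x\<close> and \<open>y\<close> agree up to a factor 4, and in general
  \<open>1 + t x\<^sup>2 \<le> 2 (1 + t y\<^sup>2)(1 + t|x - y|\<^sup>2)\<close> (Peetre), where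
  \<open>t|x - y|\<^sup>2 \<le> |X - Y|\<^sup>2 \<le> g\<^sup>\<sigma>\<^sub>\<tau>(X - Y)\<close> uniformly in \<open>\<tau>\<close>.
  So the constants \<open>C\<^sub>1 = 4\<close>, \<open>C\<^sub>2 = 2\<close>, \<open>N\<^sub>2 = 1\<close> work.
\<close>

definition vec_restrict :: "'n::finite set \<Rightarrow> real^'n \<Rightarrow> real^'n" where
  "vec_restrict S v = (\<chi> i. if i \<in> S then v$i else 0)"

lemma vec_restrict_linear: "linear (vec_restrict S)"
  by (auto intro!: linearI simp: vec_restrict_def vec_eq_iff)

lemma sub_norm_eq_norm_restrict: "sub_norm S v = norm (vec_restrict S v)"
proof -
  have "(\<Sum>i\<in>UNIV. ((vec_restrict S v)$i)\<^sup>2) = (\<Sum>i\<in>S. (v$i)^2)"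
    by (simp add: vec_restrict_def if_distrib[of "\<lambda>x. x\<^sup>2"] sum.If_cases)
  then show ?thesis by (simp add: sub_norm_def norm_vec_def L2_set_def)
qed

lemma sub_norm_diff_le: "\<bar>sub_norm S v - sub_norm S w\<bar> \<le> sub_norm S (v - w)"
  unfolding sub_norm_eq_norm_restrict linear_diff[OF vec_restrict_linear]
  by (rule norm_triangle_ineq3)

lemma norm_sq_eq_sub_norms:
  "(norm (v::real^'n::finite))\<^sup>2 = (sub_norm S v)\<^sup>2 + (sub_norm (-S) v)\<^sup>2"
proof -
  have "(norm v)\<^sup>2 = (\<Sum>i\<in>S. (v$i)\<^sup>2) + (\<Sum>i\<in>-S. (v$i)\<^sup>2)"
    by (simp add: norm_vec_def L2_set_def sum_nonneg flip: sum.union_disjoint[of S "-S", simplified])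
  then show ?thesis by (simp add: sub_norm_def sum_nonneg)
qed

lemma norm_sq_phase:
  "(norm (T::'n::finite phase))\<^sup>2
     = (sub_norm S (fst T))\<^sup>2 + (sub_norm (-S) (fst T))\<^sup>2 + (norm (snd T))\<^sup>2"
  by (simp add: norm_prod_def norm_sq_eq_sub_norms[of _ S])

lemma symp_eq_inner: "symp T T1 = inner (snd T, - fst T) T1"
  by (simp add: symp_def inner_vec_def inner_prod_def sum_subtractf sum_negf)

lemma norm_symp_rotate: "norm (snd T, - fst T) = norm T"
  by (simp add: norm_prod_def add.commute)

lemma abs_symp_le: "\<bar>symp T T1\<bar> \<le> norm T * norm T1"
  using Cauchy_Schwarz_ineq2[of "(snd T, - fst T)" T1] by (simp add: symp_eq_inner norm_symp_rotate)

lemma symp_rotate_self: "symp T (snd T, - fst T) = (norm T)\<^sup>2"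
  by (simp add: symp_eq_inner power2_norm_eq_inner inner_prod_def add.commute)

lemma nonzero_phase: "((axis k 1, 0) :: 'n::finite phase) \<in> -{0}"
  by (simp add: prod_eq_iff)

lemma dual_metric_ge_norm_sq:
  fixes g :: "'n::finite phase \<Rightarrow> 'n phase \<Rightarrow> real"
  assumes upper: "\<And>T. g X T \<le> (norm T)\<^sup>2"
    and lower: "0 < m" "\<And>T. m * (norm T)\<^sup>2 \<le> g X T"
  shows "(norm T)\<^sup>2 \<le> dual_metric g X T"
proof -
  have g_pos: "0 < g X T1" if "T1 \<noteq> 0" for T1
  proof -
    have "0 < m * (norm T1)\<^sup>2" using \<open>0 < m\<close> that by simp
    then show ?thesis using lower(2)[of T1] by linarith
  qed
  have "\<bar>symp T T1\<bar>\<^sup>2 / g X T1 \<le> (norm T)\<^sup>2 / m" if "T1 \<noteq> 0" for T1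
  proof -
    have "\<bar>symp T T1\<bar>\<^sup>2 \<le> (norm T)\<^sup>2 * (norm T1)\<^sup>2"
      using power_mono[OF abs_symp_le abs_ge_zero, of T T1 2] by (simp add: power_mult_distrib)
    then have "\<bar>symp T T1\<bar>\<^sup>2 / g X T1 \<le> (norm T)\<^sup>2 * (norm T1)\<^sup>2 / (m * (norm T1)\<^sup>2)"
      using lower that by (intro frac_le) auto
    with that \<open>0 < m\<close> show ?thesis by simp
  qed
  then have bdd: "bdd_above ((\<lambda>T1. \<bar>symp T T1\<bar>\<^sup>2 / g X T1) ` (-{0}))"
    by (intro bdd_aboveI2) auto
  show ?thesis
  proof (cases "T = 0")
    case True
    obtain T1 :: "'n phase" where "T1 \<in> -{0}"
      using nonzero_phase by blast
    then have "\<bar>symp T T1\<bar>\<^sup>2 / g X T1 \<le> dual_metric g X T"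
      unfolding dual_metric_def by (rule cSUP_upper[OF _ bdd])
    with True show ?thesis by (simp add: symp_def)
  next
    case False
    \<comment> \<open>The supremum is essentially attained at the rotation J T, for which \<open>\<sigma>(T, J T) = |T|\<^sup>2\<close>.\<close>
    let ?J = "(snd T, - fst T)"
    have "?J \<noteq> 0"
      using False norm_symp_rotate[of T] by (metis norm_eq_zero)
    then have "0 < g X ?J" by (rule g_pos)
    have "(norm T)\<^sup>2 = ((norm T)\<^sup>2)\<^sup>2 / (norm T)\<^sup>2"
      using False by (simp add: power2_eq_square)
    also have "\<dots> \<le> ((norm T)\<^sup>2)\<^sup>2 / g X ?J"
      using upper[of ?J] \<open>0 < g X ?J\<close> False by (intro divide_left_mono) (auto simp: norm_symp_rotate)
    also have "\<dots> = \<bar>symp T ?J\<bar>\<^sup>2 / g X ?J"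
      by (simp add: symp_rotate_self)
    also have "\<dots> \<le> dual_metric g X T"
      unfolding dual_metric_def using \<open>?J \<noteq> 0\<close> by (intro cSUP_upper[OF _ bdd]) auto
    finally show ?thesis .
  qed
qed

lemma gain_ge_one:
  fixes g :: "'n::finite phase \<Rightarrow> 'n phase \<Rightarrow> real"
  assumes upper: "\<And>T. g X T \<le> (norm T)\<^sup>2"
    and lower: "0 < m" "\<And>T. m * (norm T)\<^sup>2 \<le> g X T"
  shows "1 \<le> gain g X"
  unfolding gain_def
proof (rule cINF_greatest)
  show "-{0} \<noteq> ({} :: 'n phase set)"
    using nonzero_phase by blast
next
  fix T :: "'n phase" assume "T \<in> -{0}"
  then have "0 < m * (norm T)\<^sup>2" using \<open>0 < m\<close> by simp
  then have "0 < g X T" using lower(2)[of T] by linarith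
  moreover have "g X T \<le> dual_metric g X T"
    using upper[of T] dual_metric_ge_norm_sq[of g X m T, OF upper lower] by linarith
  ultimately show "1 \<le> sqrt (dual_metric g X T / g X T)"
    by simp
qed

definition bracket_weight :: "real \<Rightarrow> real \<Rightarrow> real" where
  "bracket_weight t x = t / (1 + t * x\<^sup>2)"

lemma bracket_weight_nonneg: "0 \<le> t \<Longrightarrow> 0 \<le> bracket_weight t x"
  by (simp add: bracket_weight_def)

lemma bracket_weight_pos: "0 < t \<Longrightarrow> 0 < bracket_weight t x"
  by (simp add: bracket_weight_def add_pos_nonneg)

lemma bracket_weight_le: "0 \<le> t \<Longrightarrow> bracket_weight t x \<le> t"
  unfolding bracket_weight_def using divide_left_mono[of 1 "1 + t * x\<^sup>2" t] by (simp add: add_pos_nonneg)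

lemma bracket_weight_le_scaled:
  assumes "0 \<le> t" "1 + t * y\<^sup>2 \<le> K * (1 + t * x\<^sup>2)"
  shows "bracket_weight t x \<le> K * bracket_weight t y"
proof -
  have "0 < 1 + t * x\<^sup>2" "0 < 1 + t * y\<^sup>2"
    using assms(1) by (simp_all add: add_pos_nonneg)
  then show ?thesis
    using mult_left_mono[OF assms(2) assms(1)]
    by (simp add: bracket_weight_def field_simps)
qed

lemma sq_le_twice_sq_plus_twice_sq:
  fixes x y z :: real
  assumes "\<bar>x - y\<bar> \<le> z"
  shows "x\<^sup>2 \<le> 2 * y\<^sup>2 + 2 * z\<^sup>2"
proof -
  have "x\<^sup>2 \<le> (\<bar>y\<bar> + z)\<^sup>2"
    using assms by (intro power2_le_iff_abs_le[THEN iffD2]) auto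
  also have "\<dots> \<le> 2 * y\<^sup>2 + 2 * z\<^sup>2"
    using zero_le_power2[of "\<bar>y\<bar> - z"] by (simp add: power2_diff power2_sum)
  finally show ?thesis .
qed

lemma bracket_weight_slow:
  assumes "0 \<le> t" "\<bar>x - y\<bar> \<le> z" "bracket_weight t x * z\<^sup>2 \<le> 1/4"
  shows "bracket_weight t x \<le> 4 * bracket_weight t y \<and> bracket_weight t y \<le> 4 * bracket_weight t x"
proof -
  have pos: "0 < 1 + t * x\<^sup>2" using assms(1) by (simp add: add_pos_nonneg)
  have z: "4 * (t * z\<^sup>2) \<le> 1 + t * x\<^sup>2"
    using assms(3) pos by (simp add: bracket_weight_def field_simps)
  have "t * y\<^sup>2 \<le> t * (2 * x\<^sup>2 + 2 * z\<^sup>2)" "t * x\<^sup>2 \<le> t * (2 * y\<^sup>2 + 2 * z\<^sup>2)"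
    using assms(1,2) sq_le_twice_sq_plus_twice_sq[of y x z] sq_le_twice_sq_plus_twice_sq[of x y z]
    by (auto intro!: mult_left_mono simp: abs_minus_commute)
  then have "1 + t * y\<^sup>2 \<le> 4 * (1 + t * x\<^sup>2)" "1 + t * x\<^sup>2 \<le> 4 * (1 + t * y\<^sup>2)"
    using z by (auto simp: algebra_simps)
  then show ?thesis
    using assms(1) by (auto intro: bracket_weight_le_scaled)
qed

lemma bracket_weight_temperate:
  assumes "0 \<le> t" "\<bar>x - y\<bar> \<le> z" "t * z\<^sup>2 \<le> D"
  shows "bracket_weight t y \<le> 2 * (1 + D) * bracket_weight t x"
proof (rule bracket_weight_le_scaled[OF assms(1)])
  have "t * x\<^sup>2 \<le> t * (2 * y\<^sup>2 + 2 * z\<^sup>2)"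
    using assms(1) sq_le_twice_sq_plus_twice_sq[OF assms(2)] by (rule mult_left_mono[rotated])
  moreover have "0 \<le> t * y\<^sup>2 * (t * z\<^sup>2)"
    using assms(1) by simp
  ultimately have "1 + t * x\<^sup>2 \<le> 2 * (1 + t * y\<^sup>2) * (1 + t * z\<^sup>2)"
    by (simp add: algebra_simps)
  also have "\<dots> \<le> 2 * (1 + t * y\<^sup>2) * (1 + D)"
    using assms(1,3) by (intro mult_left_mono) auto
  finally show "1 + t * x\<^sup>2 \<le> 2 * (1 + D) * (1 + t * y\<^sup>2)"
    by (simp add: algebra_simps)
qed

lemma g_split_eq:
  assumes "0 \<le> t1" "0 \<le> t2"
  shows "g_split S (t1, t2) X T =
           bracket_weight t1 (sub_norm S (fst X)) * (sub_norm S (fst T))\<^sup>2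
         + t2 * (sub_norm (-S) (fst T))\<^sup>2
         + bracket_weight (t1 * t2) (norm (snd X)) * (norm (snd T))\<^sup>2"
  using assms by (simp add: g_split_def Let_def bracket_weight_def jbr_def power_mult_distrib)

lemma g_split_le_scaled:
  assumes "0 \<le> t1" "0 \<le> t2" "1 \<le> K"
    and "bracket_weight t1 (sub_norm S (fst X)) \<le> K * bracket_weight t1 (sub_norm S (fst Y))"
    and "bracket_weight (t1 * t2) (norm (snd X)) \<le> K * bracket_weight (t1 * t2) (norm (snd Y))"
  shows "g_split S (t1, t2) X T \<le> K * g_split S (t1, t2) Y T"
proof -
  have "t2 * (sub_norm (-S) (fst T))\<^sup>2 \<le> K * (t2 * (sub_norm (-S) (fst T))\<^sup>2)"
    using mult_right_mono[OF assms(3), of "t2 * (sub_norm (-S) (fst T))\<^sup>2"] assms(2) by simp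
  with assms(4,5) show ?thesis
    using assms(1,2)
    by (simp add: g_split_eq distrib_left add_mono mult_right_mono flip: mult.assoc)
qed

context
  fixes t1 t2 :: real
  assumes t1: "0 < t1" "t1 \<le> 1" and t2: "0 < t2" "t2 \<le> 1"
begin

lemma g_split_le_norm_sq: "g_split S (t1, t2) X T \<le> (norm T)\<^sup>2"
proof -
  have "bracket_weight t1 (sub_norm S (fst X)) \<le> 1"
    "bracket_weight (t1 * t2) (norm (snd X)) \<le> 1"
    using t1 t2 bracket_weight_le[of t1] bracket_weight_le[of "t1 * t2"] mult_le_one[of t1 t2]
    by (meson less_imp_le order_trans mult_nonneg_nonneg)+
  then show ?thesis
    using t1 t2 bracket_weight_nonneg[of t1] bracket_weight_nonneg[of "t1 * t2"]
    by (simp add: g_split_eq norm_sq_phase[of T S] add_mono mult_left_le_one_le)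
qed

lemma g_split_ge_norm_sq: "\<exists>m>0. \<forall>T. m * (norm T)\<^sup>2 \<le> g_split S (t1, t2) X T"
proof (intro exI conjI allI)
  define m where "m = min (min (bracket_weight t1 (sub_norm S (fst X))) t2) (bracket_weight (t1 * t2) (norm (snd X)))"
  show "0 < m"
    using t1 t2 by (simp add: m_def bracket_weight_pos)
  fix T :: "'a phase"
  show "m * (norm T)\<^sup>2 \<le> g_split S (t1, t2) X T"
    using t1 t2
    by (simp add: g_split_eq norm_sq_phase[of T S] m_def distrib_left add_mono mult_right_mono)
qed

lemma is_metric_g_split: "is_metric (g_split S (t1, t2))"
  unfolding is_metric_def
proof (intro allI conjI impI)
  fix X :: "'a phase"
  define B where "B T T1 =
       bracket_weight t1 (sub_norm S (fst X)) * (vec_restrict S (fst T) \<bullet> vec_restrict S (fst T1))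
     + t2 * (vec_restrict (-S) (fst T) \<bullet> vec_restrict (-S) (fst T1))
     + bracket_weight (t1 * t2) (norm (snd X)) * (snd T \<bullet> snd T1)" for T T1 :: "'a phase"
  have "bilinear B"
    unfolding bilinear_def B_def
    by (auto intro!: linearI simp: linear_add[OF vec_restrict_linear]
        linear_scale[OF vec_restrict_linear] inner_add_left inner_add_right algebra_simps)
  moreover have "\<forall>T. g_split S (t1, t2) X T = B T T"
    using t1 t2 by (simp add: B_def g_split_eq sub_norm_eq_norm_restrict power2_norm_eq_inner)
  ultimately show "\<exists>B. bilinear B \<and> (\<forall>T. g_split S (t1, t2) X T = B T T)"
    by blast
next
  fix X T :: "'a phase"
  assume "T \<noteq> 0"
  obtain m where "0 < m" "m * (norm T)\<^sup>2 \<le> g_split S (t1, t2) X T"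
    using g_split_ge_norm_sq by blast
  moreover have "0 < m * (norm T)\<^sup>2"
    using \<open>0 < m\<close> \<open>T \<noteq> 0\<close> by simp
  ultimately show "0 < g_split S (t1, t2) X T"
    by linarith
qed

lemma dual_metric_g_split_ge_norm_sq: "(norm T)\<^sup>2 \<le> dual_metric (g_split S (t1, t2)) X T"
proof -
  obtain m where "0 < m" "\<And>T. m * (norm T)\<^sup>2 \<le> g_split S (t1, t2) X T"
    using g_split_ge_norm_sq by blast
  with g_split_le_norm_sq show ?thesis
    by (rule dual_metric_ge_norm_sq)
qed

lemma dual_metric_g_split_nonneg: "0 \<le> dual_metric (g_split S (t1, t2)) X T"
  by (rule order_trans[OF zero_le_power2 dual_metric_g_split_ge_norm_sq])

lemma gain_g_split_ge_one: "1 \<le> gain (g_split S (t1, t2)) X"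
proof -
  obtain m where "0 < m" "\<And>T. m * (norm T)\<^sup>2 \<le> g_split S (t1, t2) X T"
    using g_split_ge_norm_sq by blast
  with g_split_le_norm_sq show ?thesis
    by (rule gain_ge_one)
qed

lemma g_split_slow:
  assumes "g_split S (t1, t2) X (X - Y) \<le> 1/4"
  shows "g_split S (t1, t2) Y T / 4 \<le> g_split S (t1, t2) X T
       \<and> g_split S (t1, t2) X T \<le> 4 * g_split S (t1, t2) Y T"
proof -
  let ?wq = "\<lambda>Z. bracket_weight t1 (sub_norm S (fst Z))"
  let ?wp = "\<lambda>Z. bracket_weight (t1 * t2) (norm (snd Z))"
  have "?wq X * (sub_norm S (fst X - fst Y))\<^sup>2 + t2 * (sub_norm (-S) (fst X - fst Y))\<^sup>2
      + ?wp X * (norm (snd X - snd Y))\<^sup>2 \<le> 1/4"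
    using assms t1 t2 by (simp add: g_split_eq)
  moreover have "0 \<le> ?wq X * (sub_norm S (fst X - fst Y))\<^sup>2"
    "0 \<le> t2 * (sub_norm (-S) (fst X - fst Y))\<^sup>2"
    "0 \<le> ?wp X * (norm (snd X - snd Y))\<^sup>2"
    using t1 t2 by (simp_all add: bracket_weight_nonneg)
  ultimately have small_q: "?wq X * (sub_norm S (fst X - fst Y))\<^sup>2 \<le> 1/4"
    and small_p: "?wp X * (norm (snd X - snd Y))\<^sup>2 \<le> 1/4"
    by linarith+
  have "?wq X \<le> 4 * ?wq Y \<and> ?wq Y \<le> 4 * ?wq X"
    using t1 by (intro bracket_weight_slow[OF _ sub_norm_diff_le small_q]) simp
  moreover have "?wp X \<le> 4 * ?wp Y \<and> ?wp Y \<le> 4 * ?wp X"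
    using t1 t2 by (intro bracket_weight_slow[OF _ norm_triangle_ineq3 small_p]) simp
  ultimately have "g_split S (t1, t2) X T \<le> 4 * g_split S (t1, t2) Y T"
    "g_split S (t1, t2) Y T \<le> 4 * g_split S (t1, t2) X T"
    using t1 t2 by (auto intro!: g_split_le_scaled)
  then show ?thesis
    by simp
qed

lemma g_split_temperate:
  fixes S :: "'n::finite set" and X Y :: "'n phase"
  defines "D \<equiv> dual_metric (g_split S (t1, t2)) X (X - Y)"
  shows "g_split S (t1, t2) X T \<le> 2 * (1 + D) * g_split S (t1, t2) Y T
       \<and> g_split S (t1, t2) Y T \<le> 2 * (1 + D) * g_split S (t1, t2) X T"
proof -
  let ?wq = "\<lambda>Z. bracket_weight t1 (sub_norm S (fst Z))"
  let ?wp = "\<lambda>Z. bracket_weight (t1 * t2) (norm (snd Z))"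
  have "(sub_norm S (fst X - fst Y))\<^sup>2 + (sub_norm (-S) (fst X - fst Y))\<^sup>2
      + (norm (snd X - snd Y))\<^sup>2 \<le> D"
    using dual_metric_g_split_ge_norm_sq[of "X - Y" S X] norm_sq_phase[of "X - Y" S] by (simp add: D_def)
  then have "(sub_norm S (fst X - fst Y))\<^sup>2 \<le> D" "(norm (snd X - snd Y))\<^sup>2 \<le> D"
    using zero_le_power2[of "sub_norm S (fst X - fst Y)"] zero_le_power2[of "sub_norm (-S) (fst X - fst Y)"]
      zero_le_power2[of "norm (snd X - snd Y)"]
    by linarith+
  moreover have "t1 * t2 \<le> 1"
    using t1 t2 by (simp add: mult_le_one)
  ultimately have near_q: "t1 * (sub_norm S (fst X - fst Y))\<^sup>2 \<le> D"
    and near_p: "t1 * t2 * (norm (snd X - snd Y))\<^sup>2 \<le> D"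
    using t1 t2 by (auto intro: order_trans[OF mult_left_le_one_le])
  have "?wq Y \<le> 2 * (1 + D) * ?wq X \<and> ?wq X \<le> 2 * (1 + D) * ?wq Y"
    using t1 sub_norm_diff_le[of S "fst X" "fst Y"]
    by (intro conjI bracket_weight_temperate[OF _ _ near_q]) (simp_all add: abs_minus_commute)
  moreover have "?wp Y \<le> 2 * (1 + D) * ?wp X \<and> ?wp X \<le> 2 * (1 + D) * ?wp Y"
    using t1 t2 norm_triangle_ineq3[of "snd X" "snd Y"]
    by (intro conjI bracket_weight_temperate[OF _ _ near_p]) (simp_all add: abs_minus_commute)
  moreover have "1 \<le> 2 * (1 + D)"
    using dual_metric_g_split_nonneg[of S X "X - Y"] by (simp add: D_def)
  ultimately show ?thesis
    using t1 t2 by (auto intro!: g_split_le_scaled)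
qed

end

theorem propositionA9:
  fixes S :: "'n::finite set"
  shows "admissible {\<tau>::real\<times>real. 0 < fst \<tau> \<and> fst \<tau> \<le> 1 \<and> 0 < snd \<tau> \<and> snd \<tau> \<le> 1}
           (g_split S)"
  unfolding admissible_def
proof (intro conjI)
  let ?TT = "{\<tau>::real\<times>real. 0 < fst \<tau> \<and> fst \<tau> \<le> 1 \<and> 0 < snd \<tau> \<and> snd \<tau> \<le> 1}"
  have split: "(\<forall>\<tau>\<in>?TT. P \<tau>) \<longleftrightarrow>
      (\<forall>t1 t2. 0 < t1 \<longrightarrow> t1 \<le> 1 \<longrightarrow> 0 < t2 \<longrightarrow> t2 \<le> 1 \<longrightarrow> P (t1, t2))"
    for P :: "real \<times> real \<Rightarrow> bool"
    by auto
  show "\<forall>\<tau>\<in>?TT. is_metric (g_split S \<tau>)"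
    unfolding split by (blast intro: is_metric_g_split)
  show "\<forall>\<tau>\<in>?TT. \<forall>X. 1 \<le> gain (g_split S \<tau>) X"
    unfolding split by (blast intro: gain_g_split_ge_one)
  show "\<exists>C1>0. \<forall>\<tau>\<in>?TT. \<forall>X Y. g_split S \<tau> X (X - Y) \<le> 1 / C1 \<longrightarrow>
      (\<forall>T. g_split S \<tau> Y T / C1 \<le> g_split S \<tau> X T \<and> g_split S \<tau> X T \<le> C1 * g_split S \<tau> Y T)"
    unfolding split by (intro exI[of _ "4::real"] conjI) (simp, blast dest: g_split_slow)
  have dual_powr_one: "(1 + dual_metric (g_split S (t1, t2)) X (X - Y)) powr 1
      = 1 + dual_metric (g_split S (t1, t2)) X (X - Y)"
    if "0 < t1" "t1 \<le> 1" "0 < t2" "t2 \<le> 1" for t1 t2 and X Y :: "'n phase"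
    using dual_metric_g_split_nonneg[OF that, of S X "X - Y"] by simp
  show "\<exists>C2>0. \<exists>N2>0. \<forall>\<tau>\<in>?TT. \<forall>X Y T.
      g_split S \<tau> X T \<le> C2 * (1 + dual_metric (g_split S \<tau>) X (X - Y)) powr N2 * g_split S \<tau> Y T \<and>
      g_split S \<tau> Y T \<le> C2 * (1 + dual_metric (g_split S \<tau>) X (X - Y)) powr N2 * g_split S \<tau> X T"
    unfolding split by (rule exI[of _ "2::real"], intro conjI exI[of _ "1::real"] allI impI)
      (simp_all only: dual_powr_one g_split_temperate zero_less_numeral zero_less_one)
qed

end
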